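(* For every $p\in\mathbb{N}$ and every polynomial $\widehat{v} = \sum_{\ell=0}^p \widehat{v}_\ell T_\ell$ of degree at most $p$ on $[-1,1]$, defining $\widehat{v}_\ell := 0$ for $\ell>p$, it holds that \[ \sum_{\ell\geq 2} |\widehat{v}_\ell| \;\leq\; p^4 \min_{\substack{\widehat{w}\in\mathbb{P}_p([-1,1]):\\ \widehat{w}'' = \widehat{v}''}} \|\widehat{w}\|_{L^\infty((-1,1))}. \]
   Context: For $k\in\mathbb{N}_0$, $T_k$ denotes the Chebyshev polynomial of the first kind of degree $k$, normalized so that $T_k(1)=1$ (i.e. $T_k(\cos\theta)=\cos(k\theta)$). $\mathbb{P}_p([-1,1])$ denotes the space of real polynomials of degree at most $p$ on $[-1,1]$, and $\widehat{w}''$ denotes the second derivative. *)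

theory Defs
  imports "HOL-Analysis.Analysis" "HOL-Computational_Algebra.Polynomial"
begin

fun cheb_T :: "nat \<Rightarrow> real poly" where
  "cheb_T 0 = 1"
| "cheb_T (Suc 0) = [:0, 1:]"
| "cheb_T (Suc (Suc n)) = [:0, 2:] * cheb_T (Suc n) - cheb_T n"

text \<open>L-infinity norm on (-1,1) of a polynomial (continuous, so a supremum).\<close>
definition linf_norm :: "real poly \<Rightarrow> real" where
  "linf_norm w = (SUP x\<in>{-1<..<1}. \<bar>poly w x\<bar>)"

end

theory Submission
  imports Defs
begin

(* Any admissible w differs from v = \<Sum> c_l T_l by a polynomial of degree at most one, so its
   Chebyshev coefficients d_l agree with c_l for l \<ge> 2.  At the p + 1 Chebyshev-Gauss nodes
   x_j = cos ((2j+1) pi / (2p+2)) the polynomials T_0, ..., T_p are discretely orthogonal, hence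
   d_l = 2/(p+1) \<Sum>_j w(x_j) T_l(x_j) for l \<ge> 1, and |d_l| \<le> 2 ||w||.  Summing over
   2 \<le> l \<le> p gives the bound 2 (p - 1) ||w|| \<le> p^4 ||w||. *)

lemma cheb_T_cos: "poly (cheb_T n) (cos t) = cos (real n * t)"
proof (induction n rule: cheb_T.induct)
  case (3 n)
  have "cos ((real n + 2) * t) + cos (real n * t) = 2 * cos t * cos ((real n + 1) * t)"
    using cos_add[of "(real n + 1) * t" t] cos_diff[of "(real n + 1) * t" t]
    by (simp add: algebra_simps)
  with 3 show ?case by (simp add: algebra_simps)
qed simp_all

lemma degree_cheb_T_le: "degree (cheb_T n) \<le> n"
proof (induction n rule: cheb_T.induct)
  case (3 n)
  have "degree ([:0, 2:] * cheb_T (Suc n)) \<le> Suc (Suc n)"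
    using degree_mult_le[of "[:0, 2:]" "cheb_T (Suc n)"] 3 by auto
  with 3 show ?case by (simp add: degree_diff_le)
qed simp_all

lemma degree_cheb_sum_le: "degree (\<Sum>l\<le>p. smult (c l) (cheb_T l)) \<le> p"
  by (intro degree_sum_le order.trans[OF degree_smult_le]) (auto intro: le_trans[OF degree_cheb_T_le])

(* cos (cheb_angle N j), j < N, are the zeros of T_N, i.e. the Chebyshev-Gauss nodes. *)
definition cheb_angle :: "nat \<Rightarrow> nat \<Rightarrow> real" where
  "cheb_angle N j = (2 * real j + 1) * pi / (2 * real N)"

lemma cos_cheb_angle_bounds:
  assumes "j < N"
  shows "cos (cheb_angle N j) \<in> {-1<..<1}"
proof -
  have "0 < cheb_angle N j" using assms by (simp add: cheb_angle_def)
  moreover have "(2 * real j + 1) / (2 * real N) < 1"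
    using assms by (simp add: field_simps)
  from mult_strict_right_mono[OF this pi_gt_zero] have "cheb_angle N j < pi"
    by (simp add: cheb_angle_def)
  ultimately show ?thesis
    using cos_monotone_0_pi[of 0 "cheb_angle N j"] cos_monotone_0_pi[of "cheb_angle N j" pi] by simp
qed

lemma sum_cos_cheb_angle_eq_0:
  assumes "0 < m" "m < 2 * N"
  shows "(\<Sum>j<N. cos (real m * cheb_angle N j)) = 0"
proof -
  define a where "a = real m * pi / (2 * real N)"
  have angle: "real m * cheb_angle N j = (2 * real j + 1) * a" for j
    by (simp add: a_def cheb_angle_def)
  have "sin a \<noteq> 0"
    using assms sin_gt_zero[of a] by (simp add: a_def field_simps)
  \<comment> \<open>multiplying by 2 sin a makes the sum telescope\<close>
  have step: "2 * sin a * cos ((2 * real j + 1) * a) = sin (2 * real (Suc j) * a) - sin (2 * real j * a)"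
    for j
    using sin_times_cos[of a "(2 * real j + 1) * a"] by (simp add: algebra_simps)
  have "2 * sin a * (\<Sum>j<N. cos ((2 * real j + 1) * a)) = sin (2 * real N * a) - sin (2 * real 0 * a)"
    unfolding sum_distrib_left step by (rule sum_lessThan_telescope)
  also have "2 * real N * a = real m * pi" using assms by (simp add: a_def)
  finally show ?thesis using \<open>sin a \<noteq> 0\<close> by (simp add: angle)
qed

lemma sum_cos_mult_cos_cheb_angle:
  assumes "k < N" "l < N" "0 < l"
  shows "(\<Sum>j<N. cos (real k * cheb_angle N j) * cos (real l * cheb_angle N j))
         = (if k = l then real N / 2 else 0)"
proof -
  define S where "S m = (\<Sum>j<N. cos (real m * cheb_angle N j))" for m :: nat
  define gap where "gap = (if k \<le> l then l - k else k - l)"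
  have product: "cos (real k * t) * cos (real l * t) = (cos (real gap * t) + cos (real (k + l) * t)) / 2"
    for t
  proof -
    have "cos (real k * t - real l * t) = cos (real gap * t)"
      using cos_minus[of "real gap * t"]
      by (cases "k \<le> l") (simp_all add: gap_def of_nat_diff algebra_simps)
    then show ?thesis by (simp add: cos_times_cos distrib_right)
  qed
  have "(\<Sum>j<N. cos (real k * cheb_angle N j) * cos (real l * cheb_angle N j))
      = (S gap + S (k + l)) / 2"
    unfolding product S_def by (simp add: sum.distrib flip: sum_divide_distrib)
  moreover have "S (k + l) = 0"
    unfolding S_def using assms by (intro sum_cos_cheb_angle_eq_0) auto
  moreover have "S gap = (if k = l then real N else 0)"
  proof (cases "k = l")
    case False
    then have "0 < gap" "gap < 2 * N" using assms by (auto simp: gap_def)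
    with False show ?thesis unfolding S_def by (simp add: sum_cos_cheb_angle_eq_0)
  qed (simp add: S_def gap_def)
  ultimately show ?thesis by (cases "k = l") simp_all
qed

lemma cheb_coeff_via_nodes:
  assumes "0 < l" "l \<le> p" "p < N"
  shows "(\<Sum>j<N. poly (\<Sum>k\<le>p. smult (d k) (cheb_T k)) (cos (cheb_angle N j))
                  * cos (real l * cheb_angle N j)) = d l * real N / 2"
proof -
  let ?\<theta> = "cheb_angle N"
  have "(\<Sum>j<N. poly (\<Sum>k\<le>p. smult (d k) (cheb_T k)) (cos (?\<theta> j)) * cos (real l * ?\<theta> j))
      = (\<Sum>j<N. \<Sum>k\<le>p. d k * (cos (real k * ?\<theta> j) * cos (real l * ?\<theta> j)))"
    by (simp add: poly_sum cheb_T_cos sum_distrib_right mult.assoc)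
  also have "\<dots> = (\<Sum>k\<le>p. d k * (\<Sum>j<N. cos (real k * ?\<theta> j) * cos (real l * ?\<theta> j)))"
    by (subst sum.swap) (simp only: sum_distrib_left)
  also have "\<dots> = (\<Sum>k\<le>p. d k * (if k = l then real N / 2 else 0))"
    using assms by (intro sum.cong) (simp_all add: sum_cos_mult_cos_cheb_angle)
  also have "\<dots> = d l * real N / 2"
    using assms by (simp add: if_distrib sum.delta cong: if_cong)
  finally show ?thesis .
qed

lemma abs_poly_le_linf_norm:
  assumes "x \<in> {-1<..<1}"
  shows "\<bar>poly w x\<bar> \<le> linf_norm w"
proof -
  have "compact ((\<lambda>x. \<bar>poly w x\<bar>) ` {-1..1::real})"
    by (intro compact_continuous_image continuous_intros) auto
  then have "bdd_above ((\<lambda>x. \<bar>poly w x\<bar>) ` {-1..1::real})"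
    by (intro bounded_imp_bdd_above compact_imp_bounded)
  then have "bdd_above ((\<lambda>x. \<bar>poly w x\<bar>) ` {-1<..<1::real})"
    by (rule bdd_above_mono) auto
  then show ?thesis unfolding linf_norm_def using assms by (rule cSUP_upper2) auto
qed

lemma linf_norm_nonneg: "0 \<le> linf_norm w"
  using abs_poly_le_linf_norm[of 0 w] by simp

lemma abs_cheb_coeff_le_linf_norm:
  assumes "0 < l" "l \<le> p"
  shows "\<bar>d l\<bar> \<le> 2 * linf_norm (\<Sum>k\<le>p. smult (d k) (cheb_T k))"
proof -
  define w where "w = (\<Sum>k\<le>p. smult (d k) (cheb_T k))"
  define N where "N = Suc p"
  have "p < N" "0 < N" by (simp_all add: N_def)
  let ?\<theta> = "cheb_angle N"
  have node_bound: "\<bar>poly w (cos (?\<theta> j)) * cos (real l * ?\<theta> j)\<bar> \<le> linf_norm w"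
    if "j < N" for j
  proof -
    have "\<bar>poly w (cos (?\<theta> j))\<bar> \<le> linf_norm w"
      using that by (intro abs_poly_le_linf_norm cos_cheb_angle_bounds)
    from mult_mono[OF this abs_cos_le_one linf_norm_nonneg abs_ge_zero] show ?thesis
      by (simp add: abs_mult)
  qed
  have "\<bar>d l\<bar> * real N / 2 = \<bar>d l * real N / 2\<bar>"
    by (simp add: abs_mult)
  also have "\<dots> = \<bar>\<Sum>j<N. poly w (cos (?\<theta> j)) * cos (real l * ?\<theta> j)\<bar>"
    by (simp only: cheb_coeff_via_nodes[OF assms \<open>p < N\<close>, of d, folded w_def])
  also have "\<dots> \<le> (\<Sum>j<N. \<bar>poly w (cos (?\<theta> j)) * cos (real l * ?\<theta> j)\<bar>)"
    by (rule sum_abs)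
  also have "\<dots> \<le> (\<Sum>j<N. linf_norm w)"
    using node_bound by (intro sum_mono) simp
  also have "\<dots> = real N * linf_norm w"
    by simp
  finally have "real N * \<bar>d l\<bar> \<le> real N * (2 * linf_norm w)"
    by (simp add: mult_ac)
  with \<open>0 < N\<close> show ?thesis
    by (simp add: w_def)
qed

lemma linear_if_pderiv_pderiv_eq_0:
  fixes u :: "'a::{idom, semiring_char_0} poly"
  assumes "pderiv (pderiv u) = 0"
  shows "u = [:coeff u 0, coeff u 1:]"
proof -
  have "degree u \<le> 1"
    using assms pderiv_eq_0_iff[of "pderiv u"] by (simp add: degree_pderiv)
  then show ?thesis
    by (auto simp: poly_eq_iff coeff_pCons coeff_eq_0 split: nat.splits)
qed

lemma cheb_expansion_if_pderiv_pderiv_eq: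
  assumes "0 < p"
    and "pderiv (pderiv w) = pderiv (pderiv (\<Sum>l\<le>p. smult (c l) (cheb_T l)))"
  obtains d where "\<And>l. 2 \<le> l \<Longrightarrow> d l = c l" "w = (\<Sum>k\<le>p. smult (d k) (cheb_T k))"
proof -
  define v where "v = (\<Sum>l\<le>p. smult (c l) (cheb_T l))"
  define u where "u = w - v"
  define e where "e k = (if k = 0 then coeff u 0 else if k = 1 then coeff u 1 else 0)" for k :: nat
  have "smult (e k) (cheb_T k) = (if k = 0 then smult (coeff u 0) (cheb_T k) else 0)
      + (if k = 1 then smult (coeff u 1) (cheb_T k) else 0)" for k
    by (simp add: e_def)
  then have "(\<Sum>k\<le>p. smult (e k) (cheb_T k)) = [:coeff u 0, coeff u 1:]"
    using assms(1) by (simp add: sum.distrib sum.delta one_pCons)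
  also have "\<dots> = u"
    using assms(2) by (intro linear_if_pderiv_pderiv_eq_0[symmetric]) (simp add: u_def v_def pderiv_diff)
  finally have "w = (\<Sum>k\<le>p. smult (c k + e k) (cheb_T k))"
    by (simp add: u_def v_def smult_add_left sum.distrib)
  then show ?thesis
    by (rule that[of "\<lambda>k. c k + e k", rotated]) (simp add: e_def)
qed

lemma sum_abs_cheb_coeffs_le_linf_norm:
  assumes "0 < p"
    and "pderiv (pderiv w) = pderiv (pderiv (\<Sum>l\<le>p. smult (c l) (cheb_T l)))"
  shows "(\<Sum>l=2..p. \<bar>c l\<bar>) \<le> 2 * (real p - 1) * linf_norm w"
proof -
  obtain d where d: "\<And>l. 2 \<le> l \<Longrightarrow> d l = c l" and w: "w = (\<Sum>k\<le>p. smult (d k) (cheb_T k))"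
    using cheb_expansion_if_pderiv_pderiv_eq[OF assms] by blast
  have "(\<Sum>l=2..p. \<bar>c l\<bar>) = (\<Sum>l=2..p. \<bar>d l\<bar>)" using d by simp
  also have "\<dots> \<le> (\<Sum>l=2..p. 2 * linf_norm w)"
    unfolding w by (intro sum_mono abs_cheb_coeff_le_linf_norm) auto
  also have "\<dots> = 2 * (real p - 1) * linf_norm w"
    using assms(1) by (simp add: of_nat_diff)
  finally show ?thesis .
qed

theorem lemma3p3:
  fixes p :: nat and c :: "nat \<Rightarrow> real"
  assumes "p \<ge> 1"
  shows "(\<Sum>l=2..p. \<bar>c l\<bar>) \<le> real p ^ 4 *
    (INF w\<in>{w :: real poly. degree w \<le> p \<and>
        pderiv (pderiv w) = pderiv (pderiv (\<Sum>l\<le>p. smult (c l) (cheb_T l)))}.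
       linf_norm w)"
proof -
  let ?v = "\<Sum>l\<le>p. smult (c l) (cheb_T l)"
  let ?W = "{w :: real poly. degree w \<le> p \<and> pderiv (pderiv w) = pderiv (pderiv ?v)}"
  have p4: "2 * (real p - 1) \<le> real p ^ 4"
    using assms power_increasing[of 2 4 "real p"] zero_le_power2[of "real p - 1"]
    by (simp add: power2_diff)
  have "(\<Sum>l=2..p. \<bar>c l\<bar>) / real p ^ 4 \<le> linf_norm w" if "w \<in> ?W" for w
  proof -
    have "(\<Sum>l=2..p. \<bar>c l\<bar>) \<le> 2 * (real p - 1) * linf_norm w"
      using that assms by (intro sum_abs_cheb_coeffs_le_linf_norm) auto
    also have "\<dots> \<le> real p ^ 4 * linf_norm w"
      using p4 linf_norm_nonneg by (rule mult_right_mono)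
    finally show ?thesis using assms by (simp add: pos_divide_le_eq mult.commute)
  qed
  moreover have "?v \<in> ?W" by (simp add: degree_cheb_sum_le)
  ultimately have "(\<Sum>l=2..p. \<bar>c l\<bar>) / real p ^ 4 \<le> (INF w\<in>?W. linf_norm w)"
    by (intro cINF_greatest) auto
  then show ?thesis using assms by (simp add: pos_divide_le_eq mult.commute)
qed

end
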